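(* Every RPA-recognizable $\omega$-language is RPBA-recognizable, and there is an RPBA-recognizable $\omega$-language that is not RPA-recognizable.
   Context: A Parikh automaton of dimension $d$ is $\mathcal{A}=(Q,\Sigma,q_0,\Delta,F,C)$ with finite $Q$, $q_0\in Q$, $F\subseteq Q$, finite $\Delta\subseteq Q\times\Sigma\times\mathbb{N}^d\times Q$ and semi-linear $C\subseteq\mathbb{N}^d$ (a finite union of sets $\{b_0+\sum_{j=1}^\ell b_jz_j\mid z_j\in\mathbb{N}\}$, $b_j\in\mathbb{N}^d$). A run on an infinite word $\alpha$ is $r_1r_2\cdots$ with $r_i=(p_{i-1},\alpha_i,\mathbf{v}_i,p_i)\in\Delta$, $p_0=q_0$, and $\rho(r_1\cdots r_i)=\sum_{k\le i}\mathbf{v}_k$. For an RPA (reachability Parikh automaton) the run is accepting if there is $i\ge1$ with $p_i\in F$ and $\rho(r_1\cdots r_i)\in C$. For an RPBA (reachability Parikh–Büchi automaton) the run is accepting if there is $i\ge1$ with $p_i\in F$ and $\rho(r_1\cdots r_i)\in C$, and additionally there are infinitely many $j$ with $p_j\in F$. An $\omega$-language is X-recognizable if it equals the set of infinite words with an accepting run of some automaton of type X. *)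

theory Defs
  imports Main
begin

text \<open>Vectors of \<nat>^d are represented as lists of naturals of length d.\<close>

definition nvecs :: "nat \<Rightarrow> nat list set" where
  "nvecs d = {v. length v = d}"

definition linear_set :: "nat \<Rightarrow> nat list \<Rightarrow> nat list list \<Rightarrow> nat list set" where
  "linear_set d b0 P =
     {map (\<lambda>k. b0 ! k + (\<Sum>j<length P. z j * (P ! j ! k))) [0..<d] | z. True}"

definition semilinear :: "nat \<Rightarrow> nat list set \<Rightarrow> bool" where
  "semilinear d C \<longleftrightarrow>
     (\<exists>G :: (nat list \<times> nat list list) set. finite G \<and>
        (\<forall>(b0, P) \<in> G. b0 \<in> nvecs d \<and> set P \<subseteq> nvecs d) \<and>
        C = (\<Union>(b0, P) \<in> G. linear_set d b0 P))"

text \<open>A Parikh automaton (Q, \<Sigma>, q0, \<Delta>, F, C) of dimension d; the alphabet is the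
  (finite) type 'a.\<close>
record ('q, 'a) parikh_aut =
  pa_states :: "'q set"
  pa_init :: 'q
  pa_trans :: "('q \<times> 'a \<times> nat list \<times> 'q) set"
  pa_final :: "'q set"
  pa_dim :: nat
  pa_constr :: "nat list set"

definition pa_wf :: "('q, 'a) parikh_aut \<Rightarrow> bool" where
  "pa_wf A \<longleftrightarrow> finite (pa_states A) \<and> pa_init A \<in> pa_states A
     \<and> pa_final A \<subseteq> pa_states A \<and> finite (pa_trans A)
     \<and> pa_trans A \<subseteq> pa_states A \<times> UNIV \<times> nvecs (pa_dim A) \<times> pa_states A
     \<and> semilinear (pa_dim A) (pa_constr A)"

text \<open>A run on the infinite word \<alpha> (letters \<alpha> 0, \<alpha> 1, ...) is given by the state
  sequence p (p 0 = q0) and the vector labels v; the i-th transition (counted from 0)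
  is (p i, \<alpha> i, v i, p (i+1)).\<close>
definition pa_run :: "('q, 'a) parikh_aut \<Rightarrow> (nat \<Rightarrow> 'a) \<Rightarrow> (nat \<Rightarrow> 'q) \<Rightarrow> (nat \<Rightarrow> nat list) \<Rightarrow> bool" where
  "pa_run A \<alpha> p v \<longleftrightarrow> p 0 = pa_init A \<and> (\<forall>i. (p i, \<alpha> i, v i, p (Suc i)) \<in> pa_trans A)"

definition psum :: "nat \<Rightarrow> (nat \<Rightarrow> nat list) \<Rightarrow> nat \<Rightarrow> nat list" where
  "psum d v n = map (\<lambda>k. \<Sum>i<n. v i ! k) [0..<d]"

definition rpa_accepting :: "('q, 'a) parikh_aut \<Rightarrow> (nat \<Rightarrow> 'q) \<Rightarrow> (nat \<Rightarrow> nat list) \<Rightarrow> bool" where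
  "rpa_accepting A p v \<longleftrightarrow>
     (\<exists>i\<ge>1. p i \<in> pa_final A \<and> psum (pa_dim A) v i \<in> pa_constr A)"

definition rpba_accepting :: "('q, 'a) parikh_aut \<Rightarrow> (nat \<Rightarrow> 'q) \<Rightarrow> (nat \<Rightarrow> nat list) \<Rightarrow> bool" where
  "rpba_accepting A p v \<longleftrightarrow>
     (\<exists>i\<ge>1. p i \<in> pa_final A \<and> psum (pa_dim A) v i \<in> pa_constr A)
     \<and> infinite {j. p j \<in> pa_final A}"

definition rpa_lang :: "('q, 'a) parikh_aut \<Rightarrow> (nat \<Rightarrow> 'a) set" where
  "rpa_lang A = {\<alpha>. \<exists>p v. pa_run A \<alpha> p v \<and> rpa_accepting A p v}"

definition rpba_lang :: "('q, 'a) parikh_aut \<Rightarrow> (nat \<Rightarrow> 'a) set" where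
  "rpba_lang A = {\<alpha>. \<exists>p v. pa_run A \<alpha> p v \<and> rpba_accepting A p v}"

text \<open>Recognizability; states are taken from nat (any finite state set embeds).\<close>
definition RPA_recognizable :: "(nat \<Rightarrow> 'a::finite) set \<Rightarrow> bool" where
  "RPA_recognizable L \<longleftrightarrow> (\<exists>A :: (nat, 'a) parikh_aut. pa_wf A \<and> L = rpa_lang A)"

definition RPBA_recognizable :: "(nat \<Rightarrow> 'a::finite) set \<Rightarrow> bool" where
  "RPBA_recognizable L \<longleftrightarrow> (\<exists>A :: (nat, 'a) parikh_aut. pa_wf A \<and> L = rpba_lang A)"

end

theory Submission
  imports Defs "HOL-Library.Infinite_Set"
begin

text \<open>An RPA becomes an RPBA by adding a second copy of the automaton, entered along a transition
  into a final state, in which every state is final and every vector label is zero: the Buchi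
  condition then holds automatically, and the Parikh image stays frozen at its value at the
  moment of the jump.

  Conversely, the words over \<open>bool\<close> with infinitely many \<open>True\<close>s form the language of a
  two-state RPBA of dimension 0. No RPA recognises it: an accepting run on a word whose
  \<open>True\<close>s are separated by blocks of \<open>card Q\<close> letters \<open>False\<close> has accepted at some position
  \<open>i\<close>, and in such a block after \<open>i\<close> it repeats a state. Looping forever inside the block
  gives an accepting run on a word with only finitely many \<open>True\<close>s.\<close>

lemma pa_run_in_states:
  assumes "pa_wf A" "pa_run A \<alpha> p v"
  shows "p n \<in> pa_states A"
proof (cases n)
  case 0
  then show ?thesis using assms by (auto simp: pa_wf_def pa_run_def)
next
  case (Suc m)
  have "(p m, \<alpha> m, v m, p (Suc m)) \<in> pa_trans A" using assms(2) by (auto simp: pa_run_def)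
  then show ?thesis using assms(1) Suc by (auto simp: pa_wf_def)
qed

lemma psum_cong: "(\<And>n. n < i \<Longrightarrow> v n = w n) \<Longrightarrow> psum d v i = psum d w i"
  unfolding psum_def by (intro map_cong refl sum.cong) auto

lemma psum_eq_if_zero_between:
  assumes "i \<le> j" "\<And>n. i \<le> n \<Longrightarrow> n < j \<Longrightarrow> v n = replicate d 0"
  shows "psum d v j = psum d v i"
  using assms
proof (induction j rule: dec_induct)
  case (step n)
  then have "psum d v (Suc n) = psum d v n" by (simp add: psum_def)
  with step show ?case by simp
qed simp

subsection \<open>From RPA to RPBA\<close>

text \<open>State \<open>q\<close> of \<open>A\<close> becomes \<open>2 * q\<close> in the original copy and \<open>2 * q + 1\<close> in the frozen copy.\<close>

definition rpba_of_rpa :: "(nat, 'a) parikh_aut \<Rightarrow> (nat, 'a) parikh_aut" where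
  "rpba_of_rpa A =
    \<lparr>pa_states = (\<lambda>q. 2 * q) ` pa_states A \<union> (\<lambda>q. 2 * q + 1) ` pa_states A,
     pa_init = 2 * pa_init A,
     pa_trans = (\<lambda>(p, a, v, q). (2 * p, a, v, 2 * q)) ` pa_trans A
       \<union> (\<lambda>(p, a, v, q). (2 * p, a, v, 2 * q + 1)) ` (pa_trans A \<inter> UNIV \<times> UNIV \<times> UNIV \<times> pa_final A)
       \<union> (\<lambda>(p, a, v, q). (2 * p + 1, a, replicate (pa_dim A) 0, 2 * q + 1)) ` pa_trans A,
     pa_final = (\<lambda>q. 2 * q + 1) ` pa_states A,
     pa_dim = pa_dim A,
     pa_constr = pa_constr A\<rparr>"

lemma rpba_of_rpa_simps:
  "pa_states (rpba_of_rpa A) = (\<lambda>q. 2 * q) ` pa_states A \<union> (\<lambda>q. 2 * q + 1) ` pa_states A"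
  "pa_init (rpba_of_rpa A) = 2 * pa_init A"
  "pa_final (rpba_of_rpa A) = (\<lambda>q. 2 * q + 1) ` pa_states A"
  "pa_dim (rpba_of_rpa A) = pa_dim A"
  "pa_constr (rpba_of_rpa A) = pa_constr A"
  by (simp_all add: rpba_of_rpa_def)

lemma pa_trans_rpba_of_rpa_iff:
  "(x, a, w, y) \<in> pa_trans (rpba_of_rpa A) \<longleftrightarrow>
     (\<exists>p q. x = 2 * p \<and> y = 2 * q \<and> (p, a, w, q) \<in> pa_trans A)
   \<or> (\<exists>p q. x = 2 * p \<and> y = 2 * q + 1 \<and> q \<in> pa_final A \<and> (p, a, w, q) \<in> pa_trans A)
   \<or> (\<exists>p q u. x = 2 * p + 1 \<and> y = 2 * q + 1 \<and> w = replicate (pa_dim A) 0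
        \<and> (p, a, u, q) \<in> pa_trans A)"
  by (auto simp: rpba_of_rpa_def image_iff) force

lemma pa_wf_rpba_of_rpa:
  assumes "pa_wf A"
  shows "pa_wf (rpba_of_rpa A)"
proof -
  have "x \<in> pa_states (rpba_of_rpa A) \<and> w \<in> nvecs (pa_dim A) \<and> y \<in> pa_states (rpba_of_rpa A)"
    if "(x, a, w, y) \<in> pa_trans (rpba_of_rpa A)" for x a w y
    using that assms unfolding pa_trans_rpba_of_rpa_iff rpba_of_rpa_simps pa_wf_def nvecs_def
    by (elim disjE exE conjE) (simp; blast)+
  then have "pa_trans (rpba_of_rpa A)
      \<subseteq> pa_states (rpba_of_rpa A) \<times> UNIV \<times> nvecs (pa_dim A) \<times> pa_states (rpba_of_rpa A)"
    by fast
  with assms show ?thesis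
    unfolding pa_wf_def by (auto simp: rpba_of_rpa_simps) (simp add: rpba_of_rpa_def)
qed

lemma rpa_lang_subset_rpba_lang_rpba_of_rpa:
  assumes "pa_wf A"
  shows "rpa_lang A \<subseteq> rpba_lang (rpba_of_rpa A)"
proof
  fix \<alpha> assume "\<alpha> \<in> rpa_lang A"
  then obtain p v i where run: "pa_run A \<alpha> p v" and i: "i \<ge> 1" "p i \<in> pa_final A"
    "psum (pa_dim A) v i \<in> pa_constr A"
    by (auto simp: rpa_lang_def rpa_accepting_def)
  have states: "p n \<in> pa_states A" for n using pa_run_in_states[OF assms run] .
  define p' where "p' n = (if n < i then 2 * p n else 2 * p n + 1)" for n
  define v' where "v' n = (if n < i then v n else replicate (pa_dim A) 0)" for n
  have "pa_run (rpba_of_rpa A) \<alpha> p' v'"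
    unfolding pa_run_def
  proof (intro conjI allI)
    show "p' 0 = pa_init (rpba_of_rpa A)"
      using run i by (simp add: p'_def pa_run_def rpba_of_rpa_simps)
    fix n
    have "(p n, \<alpha> n, v n, p (Suc n)) \<in> pa_trans A" using run by (simp add: pa_run_def)
    then show "(p' n, \<alpha> n, v' n, p' (Suc n)) \<in> pa_trans (rpba_of_rpa A)"
      using i by (cases "Suc n < i"; cases "Suc n = i")
        (auto simp: p'_def v'_def pa_trans_rpba_of_rpa_iff)
  qed
  moreover have "rpba_accepting (rpba_of_rpa A) p' v'"
    unfolding rpba_accepting_def
  proof (intro conjI)
    have "psum (pa_dim A) v' i = psum (pa_dim A) v i" by (rule psum_cong) (simp add: v'_def)
    then show "\<exists>i\<ge>1. p' i \<in> pa_final (rpba_of_rpa A)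
        \<and> psum (pa_dim (rpba_of_rpa A)) v' i \<in> pa_constr (rpba_of_rpa A)"
      using i states by (auto simp: rpba_of_rpa_simps p'_def intro!: exI[of _ i])
    have "{i..} \<subseteq> {j. p' j \<in> pa_final (rpba_of_rpa A)}"
      using states by (auto simp: rpba_of_rpa_simps p'_def)
    then show "infinite {j. p' j \<in> pa_final (rpba_of_rpa A)}"
      using infinite_Ici finite_subset by blast
  qed
  ultimately show "\<alpha> \<in> rpba_lang (rpba_of_rpa A)" by (auto simp: rpba_lang_def)
qed

lemma pa_run_rpba_of_rpa_frozen:
  assumes run: "pa_run (rpba_of_rpa A) \<alpha> p v" and "odd (p i)" "i \<le> n"
  shows "odd (p n)" "v n = replicate (pa_dim A) 0"
proof -
  have trans: "(p n, \<alpha> n, v n, p (Suc n)) \<in> pa_trans (rpba_of_rpa A)" for n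
    using run by (simp add: pa_run_def)
  show odd: "odd (p n)"
    using \<open>i \<le> n\<close>
  proof (induction n rule: dec_induct)
    case base
    show ?case using \<open>odd (p i)\<close> .
  next
    case (step n)
    then show ?case using trans[of n] unfolding pa_trans_rpba_of_rpa_iff by auto
  qed
  show "v n = replicate (pa_dim A) 0"
    using trans[of n] odd unfolding pa_trans_rpba_of_rpa_iff by auto
qed

lemma pa_run_rpba_of_rpa_project:
  assumes run: "pa_run (rpba_of_rpa A) \<alpha> p v"
  obtains u where "pa_run A \<alpha> (\<lambda>n. p n div 2) u" "\<And>n. even (p n) \<Longrightarrow> u n = v n"
proof
  have trans: "(p n, \<alpha> n, v n, p (Suc n)) \<in> pa_trans (rpba_of_rpa A)" for n
    using run by (simp add: pa_run_def)
  define u where "u n = (if even (p n) then v n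
    else SOME w. (p n div 2, \<alpha> n, w, p (Suc n) div 2) \<in> pa_trans A)" for n
  show "u n = v n" if "even (p n)" for n using that by (simp add: u_def)
  show "pa_run A \<alpha> (\<lambda>n. p n div 2) u"
    unfolding pa_run_def
  proof (intro conjI allI)
    show "p 0 div 2 = pa_init A" using run by (simp add: pa_run_def rpba_of_rpa_simps)
    fix n
    show "(p n div 2, \<alpha> n, u n, p (Suc n) div 2) \<in> pa_trans A"
    proof (cases "even (p n)")
      case True
      then show ?thesis using trans[of n] unfolding pa_trans_rpba_of_rpa_iff by (auto simp: u_def)
    next
      case False
      then have "\<exists>w. (p n div 2, \<alpha> n, w, p (Suc n) div 2) \<in> pa_trans A"
        using trans[of n] unfolding pa_trans_rpba_of_rpa_iff by auto
      then have "(p n div 2, \<alpha> n, SOME w. (p n div 2, \<alpha> n, w, p (Suc n) div 2) \<in> pa_trans A,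
          p (Suc n) div 2) \<in> pa_trans A"
        by (rule someI_ex)
      with False show ?thesis by (simp add: u_def)
    qed
  qed
qed

lemma rpba_lang_rpba_of_rpa_subset_rpa_lang: "rpba_lang (rpba_of_rpa A) \<subseteq> rpa_lang A"
proof
  fix \<alpha> assume "\<alpha> \<in> rpba_lang (rpba_of_rpa A)"
  then obtain p v j q where run: "pa_run (rpba_of_rpa A) \<alpha> p v"
    and j: "p j = 2 * q + 1" "psum (pa_dim A) v j \<in> pa_constr A"
    by (auto simp: rpba_lang_def rpba_accepting_def rpba_of_rpa_simps)
  have trans: "(p n, \<alpha> n, v n, p (Suc n)) \<in> pa_trans (rpba_of_rpa A)" for n
    using run by (simp add: pa_run_def)
  have odd_j: "odd (p j)" using j(1) by simp
  define i where "i = (LEAST n. odd (p n))"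
  have odd_i: "odd (p i)" unfolding i_def using odd_j by (rule LeastI)
  have even_before: "even (p n)" if "n < i" for n using that not_less_Least i_def by blast
  have "i \<le> j" using odd_j even_before by (meson not_le)
  obtain m where m: "i = Suc m"
    using odd_i run by (cases i) (auto simp: pa_run_def rpba_of_rpa_simps)
  obtain u where run_A: "pa_run A \<alpha> (\<lambda>n. p n div 2) u" and u: "\<And>n. even (p n) \<Longrightarrow> u n = v n"
    using pa_run_rpba_of_rpa_project[OF run] by metis
  have "p i div 2 \<in> pa_final A"
    using trans[of m] even_before[of m] odd_i m unfolding pa_trans_rpba_of_rpa_iff by auto
  moreover have "psum (pa_dim A) u i = psum (pa_dim A) v j"
  proof -
    have "psum (pa_dim A) u i = psum (pa_dim A) v i" by (rule psum_cong) (simp add: u even_before)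
    also have "\<dots> = psum (pa_dim A) v j"
      using \<open>i \<le> j\<close> pa_run_rpba_of_rpa_frozen(2)[OF run odd_i]
      by (intro psum_eq_if_zero_between[symmetric])
    finally show ?thesis .
  qed
  ultimately have "rpa_accepting A (\<lambda>n. p n div 2) u"
    using j(2) m unfolding rpa_accepting_def by (intro exI[of _ i]) auto
  with run_A show "\<alpha> \<in> rpa_lang A" by (auto simp: rpa_lang_def)
qed

lemma RPA_recognizable_imp_RPBA_recognizable: "RPA_recognizable L \<Longrightarrow> RPBA_recognizable L"
  unfolding RPA_recognizable_def RPBA_recognizable_def
  using pa_wf_rpba_of_rpa rpa_lang_subset_rpba_lang_rpba_of_rpa
    rpba_lang_rpba_of_rpa_subset_rpa_lang
  by (metis subset_antisym)

subsection \<open>Pumping a run of an RPA\<close>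

definition lasso_index :: "nat \<Rightarrow> nat \<Rightarrow> nat \<Rightarrow> nat" where
  "lasso_index j k n = (if n < j then n else j + (n - j) mod (k - j))"

lemma lasso_index_eq_self: "n \<le> j \<Longrightarrow> lasso_index j k n = n"
  by (auto simp: lasso_index_def)

lemma lasso_index_in_loop:
  assumes "j < k" "j \<le> n"
  shows "j \<le> lasso_index j k n" "lasso_index j k n < k"
proof -
  have "j + (n - j) mod (k - j) < k"
    using assms(1) mod_less_divisor[of "k - j" "n - j"] by linarith
  then show "j \<le> lasso_index j k n" "lasso_index j k n < k"
    using assms by (auto simp: lasso_index_def)
qed

lemma lasso_index_Suc:
  assumes "j < k"
  shows "lasso_index j k (Suc n) =
    (if Suc (lasso_index j k n) = k then j else Suc (lasso_index j k n))"
proof (cases "n < j")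
  case True
  then show ?thesis using assms by (auto simp: lasso_index_def)
next
  case False
  then have "Suc n - j = Suc (n - j)" by simp
  with False assms show ?thesis by (auto simp: lasso_index_def mod_Suc)
qed

lemma pa_run_lasso:
  assumes run: "pa_run A \<alpha> p v" and "j < k" "p j = p k"
  shows "pa_run A (\<alpha> \<circ> lasso_index j k) (p \<circ> lasso_index j k) (v \<circ> lasso_index j k)"
  unfolding pa_run_def
proof (intro conjI allI)
  show "(p \<circ> lasso_index j k) 0 = pa_init A" using run by (simp add: pa_run_def lasso_index_eq_self)
  fix n
  define m where "m = lasso_index j k n"
  have "p (lasso_index j k (Suc n)) = p (Suc m)"
    using \<open>j < k\<close> \<open>p j = p k\<close> by (simp add: lasso_index_Suc m_def)
  moreover have "(p m, \<alpha> m, v m, p (Suc m)) \<in> pa_trans A" using run by (simp add: pa_run_def)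
  ultimately show "((p \<circ> lasso_index j k) n, (\<alpha> \<circ> lasso_index j k) n, (v \<circ> lasso_index j k) n,
      (p \<circ> lasso_index j k) (Suc n)) \<in> pa_trans A"
    by (simp add: m_def)
qed

lemma rpa_accepting_lasso:
  assumes "1 \<le> i" "i \<le> j" "p i \<in> pa_final A" "psum (pa_dim A) v i \<in> pa_constr A"
  shows "rpa_accepting A (p \<circ> lasso_index j k) (v \<circ> lasso_index j k)"
proof -
  have "psum (pa_dim A) (v \<circ> lasso_index j k) i = psum (pa_dim A) v i"
    using \<open>i \<le> j\<close> by (intro psum_cong) (simp add: lasso_index_eq_self)
  with assms show ?thesis
    unfolding rpa_accepting_def by (intro exI[of _ i]) (simp add: lasso_index_eq_self)
qed

lemma pa_run_repeats_state:
  assumes "pa_wf A" "pa_run A \<alpha> p v"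
  obtains j k where "m \<le> j" "j < k" "k \<le> m + card (pa_states A)" "p j = p k"
proof -
  have "\<not> inj_on p {m..m + card (pa_states A)}"
  proof
    assume "inj_on p {m..m + card (pa_states A)}"
    moreover have "finite (pa_states A)" using assms(1) by (simp add: pa_wf_def)
    ultimately have "card {m..m + card (pa_states A)} \<le> card (pa_states A)"
      using card_inj_on_le pa_run_in_states[OF assms] by blast
    then show False by simp
  qed
  then obtain x y where "x \<in> {m..m + card (pa_states A)}" "y \<in> {m..m + card (pa_states A)}"
    "x \<noteq> y" "p x = p y"
    unfolding inj_on_def by blast
  then show ?thesis
    using that[of "min x y" "max x y"] by (cases "x < y") (auto simp: min_def max_def)
qed

subsection \<open>Infinitely many letters \<open>True\<close>\<close>

definition inf_true_rpba :: "(nat, bool) parikh_aut" where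
  "inf_true_rpba =
    \<lparr>pa_states = {0, 1},
     pa_init = 0,
     pa_trans = {(q, a, [], if a then 1 else 0) | q a. q \<in> {0, 1}},
     pa_final = {1},
     pa_dim = 0,
     pa_constr = {[]}\<rparr>"

lemma pa_wf_inf_true_rpba: "pa_wf inf_true_rpba"
proof -
  have "semilinear 0 {[]}"
    unfolding semilinear_def
    by (rule exI[of _ "{([], [])}"]) (auto simp: nvecs_def linear_set_def)
  moreover have trans: "pa_trans inf_true_rpba \<subseteq> {0, 1} \<times> UNIV \<times> {[]} \<times> {0, 1}"
    by (auto simp: inf_true_rpba_def)
  moreover have "finite (pa_trans inf_true_rpba)"
    using trans by (rule finite_subset) simp
  ultimately show ?thesis
    by (simp add: pa_wf_def nvecs_def) (simp add: inf_true_rpba_def)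
qed

lemma pa_run_inf_true_rpba_iff:
  "pa_run inf_true_rpba \<alpha> p v \<longleftrightarrow>
    p = (\<lambda>n. case n of 0 \<Rightarrow> 0 | Suc m \<Rightarrow> if \<alpha> m then 1 else 0) \<and> v = (\<lambda>_. [])"
proof
  assume run: "pa_run inf_true_rpba \<alpha> p v"
  have "p (Suc n) = (if \<alpha> n then 1 else 0) \<and> v n = []" for n
    using run by (auto simp: pa_run_def inf_true_rpba_def)
  moreover have "p 0 = 0" using run by (simp add: pa_run_def inf_true_rpba_def)
  ultimately show "p = (\<lambda>n. case n of 0 \<Rightarrow> 0 | Suc m \<Rightarrow> if \<alpha> m then 1 else 0) \<and> v = (\<lambda>_. [])"
    by (auto intro!: ext split: nat.split)
next
  assume "p = (\<lambda>n. case n of 0 \<Rightarrow> 0 | Suc m \<Rightarrow> if \<alpha> m then 1 else 0) \<and> v = (\<lambda>_. [])"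
  then show "pa_run inf_true_rpba \<alpha> p v"
    by (auto simp: pa_run_def inf_true_rpba_def split: nat.split)
qed

lemma rpba_lang_inf_true_rpba: "rpba_lang inf_true_rpba = {\<alpha>. infinite {n. \<alpha> n}}"
proof (intro set_eqI)
  fix \<alpha> :: "nat \<Rightarrow> bool"
  define p :: "nat \<Rightarrow> nat" where "p n = (case n of 0 \<Rightarrow> 0 | Suc m \<Rightarrow> if \<alpha> m then 1 else 0)" for n
  have final: "{j. p j \<in> {1}} = Suc ` {n. \<alpha> n}"
  proof (intro set_eqI iffI)
    fix j assume "j \<in> {j. p j \<in> {1}}"
    then show "j \<in> Suc ` {n. \<alpha> n}" by (cases j) (auto simp: p_def split: if_splits)
  qed (auto simp: p_def)
  have "\<alpha> \<in> rpba_lang inf_true_rpba \<longleftrightarrow> (\<exists>i\<ge>1. p i \<in> {1}) \<and> infinite {j. p j \<in> {1}}"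
    unfolding rpba_lang_def rpba_accepting_def pa_run_inf_true_rpba_iff
    by (simp add: inf_true_rpba_def psum_def p_def)
  also have "(\<exists>i\<ge>1. p i \<in> {1}) \<longleftrightarrow> (\<exists>j. p j \<in> {1})"
  proof
    assume "\<exists>j. p j \<in> {1}"
    then obtain j where j: "p j \<in> {1}" ..
    moreover have "j \<noteq> 0" using j by (cases j) (auto simp: p_def)
    ultimately show "\<exists>i\<ge>1. p i \<in> {1}" by (intro exI[of _ j]) simp
  qed auto
  also have "(\<exists>j. p j \<in> {1}) \<and> infinite {j. p j \<in> {1}} \<longleftrightarrow> infinite {n. \<alpha> n}"
    using not_finite_existsD[of "\<lambda>j. p j \<in> {1}"] unfolding final by (auto simp: finite_image_iff)
  finally show "\<alpha> \<in> rpba_lang inf_true_rpba \<longleftrightarrow> \<alpha> \<in> {\<alpha>. infinite {n. \<alpha> n}}" by simp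
qed

lemma rpa_lang_neq_inf_true:
  fixes A :: "(nat, bool) parikh_aut"
  assumes wf: "pa_wf A"
  shows "rpa_lang A \<noteq> {\<alpha>. infinite {n. \<alpha> n}}"
proof
  assume lang: "rpa_lang A = {\<alpha>. infinite {n. \<alpha> n}}"
  define N where "N = card (pa_states A)"
  define \<alpha> where "\<alpha> n = (n mod Suc N = N)" for n
  have false_block: "\<not> \<alpha> (c * Suc N + r)" if "r < N" for c r
    using that unfolding \<alpha>_def mod_mult_self3 by simp
  have "infinite {n. \<alpha> n}"
    unfolding infinite_nat_iff_unbounded
  proof
    fix m
    have "Suc m * Suc N + N > m" by (simp add: less_Suc_eq_le)
    moreover have "\<alpha> (Suc m * Suc N + N)" unfolding \<alpha>_def mod_mult_self3 by simp
    ultimately show "\<exists>n>m. n \<in> {n. \<alpha> n}" by blast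
  qed
  then have "\<alpha> \<in> rpa_lang A" using lang by simp
  then obtain p v i where run: "pa_run A \<alpha> p v" and i: "1 \<le> i" "p i \<in> pa_final A"
    "psum (pa_dim A) v i \<in> pa_constr A"
    by (auto simp: rpa_lang_def rpa_accepting_def)
  obtain j k where jk: "i * Suc N \<le> j" "j < k" "k \<le> i * Suc N + N" "p j = p k"
    using pa_run_repeats_state[OF wf run] unfolding N_def by blast
  have "i \<le> j" using jk(1) by (metis le_add1 le_trans mult_Suc_right)
  have "\<alpha> \<circ> lasso_index j k \<in> rpa_lang A"
    using pa_run_lasso[OF run jk(2,4)]
      rpa_accepting_lasso[where p = p and v = v and k = k, OF i(1) \<open>i \<le> j\<close> i(2,3)]
    by (auto simp: rpa_lang_def)
  moreover have "{n. (\<alpha> \<circ> lasso_index j k) n} \<subseteq> {..<j}"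
  proof
    fix n assume "n \<in> {n. (\<alpha> \<circ> lasso_index j k) n}"
    moreover have "\<not> \<alpha> (lasso_index j k n)" if "j \<le> n"
    proof -
      define r where "r = lasso_index j k n - i * Suc N"
      have "lasso_index j k n = i * Suc N + r" "r < N"
        using lasso_index_in_loop[OF jk(2) that] jk(1,3) by (auto simp: r_def)
      then show ?thesis using false_block by simp
    qed
    ultimately show "n \<in> {..<j}" by force
  qed
  then have "finite {n. (\<alpha> \<circ> lasso_index j k) n}" using finite_subset by blast
  ultimately show False using lang by simp
qed

theorem lemma2:
  shows "(\<forall>L :: (nat \<Rightarrow> 'a::finite) set. RPA_recognizable L \<longrightarrow> RPBA_recognizable L)
         \<and> (\<exists>L :: (nat \<Rightarrow> bool) set. RPBA_recognizable L \<and> \<not> RPA_recognizable L)"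
proof (intro conjI allI impI)
  show "RPBA_recognizable L" if "RPA_recognizable L" for L :: "(nat \<Rightarrow> 'a) set"
    using that by (rule RPA_recognizable_imp_RPBA_recognizable)
  have "RPBA_recognizable {\<alpha> :: nat \<Rightarrow> bool. infinite {n. \<alpha> n}}"
    unfolding RPBA_recognizable_def using pa_wf_inf_true_rpba rpba_lang_inf_true_rpba by metis
  moreover have "\<not> RPA_recognizable {\<alpha> :: nat \<Rightarrow> bool. infinite {n. \<alpha> n}}"
    unfolding RPA_recognizable_def using rpa_lang_neq_inf_true by metis
  ultimately show "\<exists>L :: (nat \<Rightarrow> bool) set. RPBA_recognizable L \<and> \<not> RPA_recognizable L"
    by blast
qed

end
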